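(* Let $K$ be a field, $V$ a finite-dimensional $K$-vector space, $W$ a subspace and $U$ a complement of $W$, so $V=W\oplus U$. Let $\operatorname{CWAff}_W(V)$ be the group of all $W$-coset-wise $K$-affine functions $V\to V$ that are permutations of $V$. Let $\operatorname{Aff}(W)\wr_{\mathrm{imp}}\operatorname{Sym}(U)$ be the permutation group on $W\times U$ consisting of all maps $(w,u)\mapsto(a_u(w),\sigma(u))$ with $\sigma\in\operatorname{Sym}(U)$ and $a_u\in\operatorname{Aff}(W)$ for each $u\in U$. Let $\iota:V\to W\times U$, $w+u\mapsto(w,u)$ ($w\in W,u\in U$). Then $\sigma\mapsto\iota\circ\sigma\circ\iota^{-1}$ maps $\operatorname{CWAff}_W(V)$ bijectively onto $\operatorname{Aff}(W)\wr_{\mathrm{imp}}\operatorname{Sym}(U)$ (i.e., $\iota$ is an isomorphism of permutation groups). Moreover, for every family $(\alpha_u)_{u\in U}$ of automorphisms of $W$ and every family $(v_u)_{u\in U}$ of vectors of $V$, written $v_u=\omega_u+\nu_u$ with $\omega_u\in W$, $\nu_u\in U$, such that the map $f:V\to V$, $w+u\mapsto \alpha_u(w)+u+v_u$ ($w\in W,u\in U$) is a permutation, the map $g:U\to U$, $u\mapsto u+\nu_u$, is a permutation of $U$ and $\iota\circ f\circ\iota^{-1}$ is the permutation $(w,u)\mapsto(\alpha_u(w)+\omega_u,\ g(u))$ of $W\times U$.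
   Context: A function $f:V\to V$ is $W$-coset-wise $K$-affine if for each coset $C$ of $W$ in $V$ there are $v_C\in V$ and a $K$-endomorphism $\varphi_C$ of $V$ with $\varphi_C(W)\subseteq W$ such that $f(x)=\varphi_C(x)+v_C$ for all $x\in C$. $\operatorname{Aff}(W)$ denotes the group of affine permutations of $W$, i.e., maps $w\mapsto\alpha(w)+\omega$ with $\alpha$ a $K$-automorphism of $W$ and $\omega\in W$. *)

theory Defs
  imports Complex_Main "HOL-Library.FuncSet"
begin

(* The ambient finite-dimensional K-vector space V is the whole type 'v,
   with scalar multiplication scale :: 'k \<Rightarrow> 'v \<Rightarrow> 'v. *)

definition coset_wise_affine ::
  "('k::field \<Rightarrow> 'v::ab_group_add \<Rightarrow> 'v) \<Rightarrow> 'v set \<Rightarrow> ('v \<Rightarrow> 'v) \<Rightarrow> bool" where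
  "coset_wise_affine scale W f \<longleftrightarrow>
     (\<forall>C \<in> {(\<lambda>w. v + w) ` W | v. True}.
        \<exists>\<phi> vC. Vector_Spaces.linear scale scale \<phi> \<and> \<phi> ` W \<subseteq> W \<and>
              (\<forall>x\<in>C. f x = \<phi> x + vC))"

definition CWAff ::
  "('k::field \<Rightarrow> 'v::ab_group_add \<Rightarrow> 'v) \<Rightarrow> 'v set \<Rightarrow> ('v \<Rightarrow> 'v) set" where
  "CWAff scale W = {f. coset_wise_affine scale W f \<and> bij f}"

definition sub_aut ::
  "('k::field \<Rightarrow> 'v::ab_group_add \<Rightarrow> 'v) \<Rightarrow> 'v set \<Rightarrow> ('v \<Rightarrow> 'v) \<Rightarrow> bool" where
  "sub_aut scale W \<alpha> \<longleftrightarrow>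
     (\<forall>x\<in>W. \<forall>y\<in>W. \<alpha> (x + y) = \<alpha> x + \<alpha> y) \<and>
     (\<forall>c. \<forall>x\<in>W. \<alpha> (scale c x) = scale c (\<alpha> x)) \<and>
     bij_betw \<alpha> W W"

definition in_Aff ::
  "('k::field \<Rightarrow> 'v::ab_group_add \<Rightarrow> 'v) \<Rightarrow> 'v set \<Rightarrow> ('v \<Rightarrow> 'v) \<Rightarrow> bool" where
  "in_Aff scale W a \<longleftrightarrow>
     (\<exists>\<alpha> \<omega>. sub_aut scale W \<alpha> \<and> \<omega> \<in> W \<and> (\<forall>w\<in>W. a w = \<alpha> w + \<omega>))"

definition AffWrSym ::
  "('k::field \<Rightarrow> 'v::ab_group_add \<Rightarrow> 'v) \<Rightarrow> 'v set \<Rightarrow> 'v set \<Rightarrow> ('v \<times> 'v \<Rightarrow> 'v \<times> 'v) set" where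
  "AffWrSym scale W U =
     {F. \<exists>\<sigma> a. bij_betw \<sigma> U U \<and> (\<forall>u\<in>U. in_Aff scale W (a u)) \<and>
           F = (\<lambda>p\<in>W \<times> U. (a (snd p) (fst p), \<sigma> (snd p)))}"

definition iota :: "'v::ab_group_add set \<Rightarrow> 'v set \<Rightarrow> 'v \<Rightarrow> 'v \<times> 'v" where
  "iota W U v = (THE p. fst p \<in> W \<and> snd p \<in> U \<and> v = fst p + snd p)"

definition conj_iota :: "'v::ab_group_add set \<Rightarrow> 'v set \<Rightarrow> ('v \<Rightarrow> 'v) \<Rightarrow> ('v \<times> 'v \<Rightarrow> 'v \<times> 'v)" where
  "conj_iota W U f = (\<lambda>p\<in>W \<times> U. iota W U (f (fst p + snd p)))"

end

theory Submission
  imports Defs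
begin

text \<open>Writing \<open>v = w + u\<close> uniquely with \<open>w \<in> W\<close>, \<open>u \<in> U\<close>, a coset-wise affine \<open>f\<close> reads
  \<open>f (w + u) = \<phi>\<^sub>u w + f u\<close> on the coset \<open>W + u\<close>, with \<open>\<phi>\<^sub>u\<close> linear and \<open>\<phi>\<^sub>u W \<subseteq> W\<close>.
  Splitting \<open>f u = \<omega>\<^sub>u + \<nu>\<^sub>u\<close>, the conjugate of \<open>f\<close> is \<open>(w, u) \<mapsto> (\<phi>\<^sub>u w + \<omega>\<^sub>u, \<nu>\<^sub>u)\<close>.
  A map of this fibred shape whose fibre maps are bijections of \<open>W\<close> is a permutation exactly
  when \<open>u \<mapsto> \<nu>\<^sub>u\<close> is one. Injectivity of \<open>f\<close> makes each \<open>\<phi>\<^sub>u\<close> injective on \<open>W\<close>, hence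
  bijective by finite dimensionality; conversely every element of the wreath product arises
  from the fibred map it describes, which is coset-wise affine.\<close>

lemma inj_on_linear_imp_bij_betw_subspace:
  fixes scale :: "'k::field \<Rightarrow> 'v::ab_group_add \<Rightarrow> 'v"
  assumes "finite_dimensional_vector_space scale B"
    and lin: "Vector_Spaces.linear scale scale \<phi>"
    and W: "module.subspace scale W"
    and into: "\<phi> ` W \<subseteq> W" and inj: "inj_on \<phi> W"
  shows "bij_betw \<phi> W W"
proof -
  interpret finite_dimensional_vector_space scale B by fact
  interpret pair: finite_dimensional_vector_space_pair_1 scale B scale by unfold_locales
  have "dim (\<phi> ` W) = dim W"
    by (rule pair.dim_image_eq[OF lin]) (metis inj W span_eq_iff)
  then have "\<phi> ` W = W"
    using subspace_dim_equal[OF pair.linear_subspace_image[OF lin W] W into] by simp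
  with inj show ?thesis by (simp add: bij_betw_def)
qed

context vector_space
begin

lemma bij_betw_add_const:
  assumes W: "subspace W" and \<alpha>: "bij_betw \<alpha> W W" and \<omega>: "\<omega> \<in> W"
  shows "bij_betw (\<lambda>w. \<alpha> w + \<omega>) W W"
proof -
  have "bij_betw (\<lambda>x. x + \<omega>) W W"
    by (rule bij_betwI[where g = "\<lambda>x. x - \<omega>"])
      (use subspace_add[OF W] subspace_diff[OF W] \<omega> in auto)
  from bij_betw_trans[OF \<alpha> this] show ?thesis by (simp add: comp_def)
qed

lemma coset_wise_affine_linear_part:
  assumes f: "coset_wise_affine scale W f" and W: "subspace W"
  shows "\<exists>\<phi>. Vector_Spaces.linear scale scale \<phi> \<and> \<phi> ` W \<subseteq> W \<and>
    (\<forall>w\<in>W. f (w + v) = \<phi> w + f v)"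
proof -
  obtain \<phi> c where lin: "Vector_Spaces.linear scale scale \<phi>" and into: "\<phi> ` W \<subseteq> W"
    and on_coset: "\<forall>x\<in>(\<lambda>w. v + w) ` W. f x = \<phi> x + c"
    using f unfolding coset_wise_affine_def by (rule bspec[elim_format]) blast+
  have "f (w + v) = \<phi> w + f v" if "w \<in> W" for w
  proof -
    have "f (w + v) = \<phi> (w + v) + c" using on_coset that by (force simp: add.commute)
    moreover have "f v = \<phi> v + c" using on_coset subspace_0[OF W] by force
    moreover have "\<phi> (w + v) = \<phi> w + \<phi> v" using lin by (simp add: Vector_Spaces.linear_iff)
    ultimately show ?thesis by (simp add: add.assoc)
  qed
  with lin into show ?thesis by blast
qed

end

locale complementary_subspaces = vector_space scale
  for scale :: "'k::field \<Rightarrow> 'v::ab_group_add \<Rightarrow> 'v" +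
  fixes W U :: "'v set"
  assumes subspace_W: "subspace W" and subspace_U: "subspace U"
    and W_inter_U: "W \<inter> U = {0}"
    and W_plus_U: "\<forall>v. \<exists>w\<in>W. \<exists>u\<in>U. v = w + u"
begin

lemma decomp_unique:
  assumes "w \<in> W" "u \<in> U" "w' \<in> W" "u' \<in> U" and eq: "w + u = w' + u'"
  shows "w = w' \<and> u = u'"
proof -
  have diff: "w - w' = u' - u" using eq by (simp add: algebra_simps)
  have "w - w' \<in> W" using subspace_diff[OF subspace_W] assms(1,3) by blast
  moreover have "w - w' \<in> U" using subspace_diff[OF subspace_U] assms(2,4) diff by simp
  ultimately have "w - w' = 0" using W_inter_U by blast
  with diff show ?thesis by simp
qed

lemma iota_add [simp]:
  assumes "w \<in> W" "u \<in> U"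
  shows "iota W U (w + u) = (w, u)"
  unfolding iota_def
  by (rule the_equality) (use assms decomp_unique in auto)

lemma iotaE:
  obtains w u where "iota W U v = (w, u)" "w \<in> W" "u \<in> U" "v = w + u"
  using W_plus_U iota_add by metis

lemma linear_fst_iota: "Vector_Spaces.linear scale scale (\<lambda>v. fst (iota W U v))"
proof -
  have "fst (iota W U (x + y)) = fst (iota W U x) + fst (iota W U y)" for x y
  proof -
    obtain a b where ab: "iota W U x = (a, b)" "a \<in> W" "b \<in> U" "x = a + b" by (rule iotaE)
    obtain c d where cd: "iota W U y = (c, d)" "c \<in> W" "d \<in> U" "y = c + d" by (rule iotaE)
    have "x + y = (a + c) + (b + d)" using ab(4) cd(4) by (simp add: algebra_simps)
    also have "iota W U \<dots> = (a + c, b + d)"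
      using ab cd subspace_add[OF subspace_W] subspace_add[OF subspace_U] by simp
    finally show ?thesis using ab(1) cd(1) by simp
  qed
  moreover have "fst (iota W U (scale c x)) = scale c (fst (iota W U x))" for c x
  proof -
    obtain a b where ab: "iota W U x = (a, b)" "a \<in> W" "b \<in> U" "x = a + b" by (rule iotaE)
    have "scale c x = scale c a + scale c b" using ab(4) by (simp add: scale_right_distrib)
    also have "iota W U \<dots> = (scale c a, scale c b)"
      using ab subspace_scale[OF subspace_W] subspace_scale[OF subspace_U] by simp
    finally show ?thesis using ab(1) by simp
  qed
  ultimately show ?thesis
    unfolding Vector_Spaces.linear_iff using vector_space_axioms by blast
qed

lemma inj_conj_iota: "inj (conj_iota W U)"
proof (rule injI)
  fix f g assume eq: "conj_iota W U f = conj_iota W U g"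
  show "f = g"
  proof
    fix x
    obtain w u where "iota W U x = (w, u)" "w \<in> W" "u \<in> U" "x = w + u" by (rule iotaE)
    then have "iota W U (f x) = iota W U (g x)"
      using fun_cong[OF eq, of "(w, u)"] by (simp add: conj_iota_def)
    then show "f x = g x" by (metis iotaE prod.inject)
  qed
qed

lemma coset_wise_affine_fibred:
  assumes into: "\<And>u. u \<in> U \<Longrightarrow> \<alpha> u ` W \<subseteq> W"
    and add: "\<And>u x y. u \<in> U \<Longrightarrow> x \<in> W \<Longrightarrow> y \<in> W \<Longrightarrow> \<alpha> u (x + y) = \<alpha> u x + \<alpha> u y"
    and scale: "\<And>u c x. u \<in> U \<Longrightarrow> x \<in> W \<Longrightarrow> \<alpha> u (scale c x) = scale c (\<alpha> u x)"
    and f: "\<And>w u. w \<in> W \<Longrightarrow> u \<in> U \<Longrightarrow> f (w + u) = \<alpha> u w + c u"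
  shows "coset_wise_affine scale W f"
  unfolding coset_wise_affine_def
proof
  fix C assume "C \<in> {(\<lambda>w. v + w) ` W | v. True}"
  then obtain v where C: "C = (\<lambda>w. v + w) ` W" by blast
  obtain w0 u0 where v: "iota W U v = (w0, u0)" "w0 \<in> W" "u0 \<in> U" "v = w0 + u0" by (rule iotaE)
  \<comment> \<open>all points of \<open>C\<close> have \<open>U\<close>-component \<open>u0\<close>, so \<open>f\<close> there is \<open>\<alpha> u0\<close> after projecting onto \<open>W\<close>\<close>
  define \<phi> where "\<phi> x = \<alpha> u0 (fst (iota W U x))" for x
  have fst_iota_W: "fst (iota W U x) \<in> W" for x by (metis iotaE fst_conv)
  have "Vector_Spaces.linear scale scale \<phi>"
    using linear_fst_iota fst_iota_W add[OF v(3)] scale[OF v(3)]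
    unfolding \<phi>_def Vector_Spaces.linear_iff by simp
  moreover have "\<phi> ` W \<subseteq> W"
    using into[OF v(3)] iota_add[OF _ subspace_0[OF subspace_U]] by (auto simp: \<phi>_def)
  moreover have "f x = \<phi> x + c u0" if x: "x \<in> C" for x
  proof -
    obtain w where "w \<in> W" "x = v + w" using x C by blast
    then have "x = (w0 + w) + u0" using v(4) by (simp add: algebra_simps)
    moreover have "w0 + w \<in> W" using subspace_add[OF subspace_W v(2) \<open>w \<in> W\<close>] .
    ultimately show ?thesis using f v(3) by (simp add: \<phi>_def)
  qed
  ultimately show "\<exists>\<phi> vC. Vector_Spaces.linear scale scale \<phi> \<and> \<phi> ` W \<subseteq> W \<and> (\<forall>x\<in>C. f x = \<phi> x + vC)"
    by blast
qed

end

locale fibred_map = complementary_subspaces scale W U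
  for scale :: "'k::field \<Rightarrow> 'v::ab_group_add \<Rightarrow> 'v" and W U +
  fixes a :: "'v \<Rightarrow> 'v \<Rightarrow> 'v" and s :: "'v \<Rightarrow> 'v" and f :: "'v \<Rightarrow> 'v"
  assumes fibre_into: "\<And>u w. u \<in> U \<Longrightarrow> w \<in> W \<Longrightarrow> a u w \<in> W"
    and base_into: "\<And>u. u \<in> U \<Longrightarrow> s u \<in> U"
    and fibred: "\<And>w u. w \<in> W \<Longrightarrow> u \<in> U \<Longrightarrow> f (w + u) = a u w + s u"
begin

lemma conj_iota_eq: "conj_iota W U f = (\<lambda>p\<in>W \<times> U. (a (snd p) (fst p), s (snd p)))"
  unfolding conj_iota_def
  by (rule restrict_ext) (auto simp: fibre_into base_into fibred)

lemma eq_iff: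
  assumes "w \<in> W" "u \<in> U" "w' \<in> W" "u' \<in> U"
  shows "f (w + u) = f (w' + u') \<longleftrightarrow> a u w = a u' w' \<and> s u = s u'"
  using assms fibred[of w u] fibred[of w' u'] decomp_unique[OF fibre_into[OF assms(2,1)]
      base_into[OF assms(2)] fibre_into[OF assms(4,3)] base_into[OF assms(4)]]
  by auto

context
  assumes fibre_bij: "\<And>u. u \<in> U \<Longrightarrow> bij_betw (a u) W W"
begin

lemma inj_iff: "inj f \<longleftrightarrow> inj_on s U"
proof
  assume "inj f"
  show "inj_on s U"
  proof (rule inj_onI)
    fix u u' assume u: "u \<in> U" "u' \<in> U" "s u = s u'"
    have zero: "0 \<in> W" using subspace_0[OF subspace_W] .
    obtain w' where w': "w' \<in> W" "a u' w' = a u 0"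
      using bij_betw_imp_surj_on[OF fibre_bij[OF u(2)]] fibre_into[OF u(1) zero] by (metis imageE)
    then have "f (0 + u) = f (w' + u')" using eq_iff[OF zero u(1) w'(1) u(2)] u(3) by simp
    with \<open>inj f\<close> have "0 + u = w' + u'" by (rule injD)
    then show "u = u'" using decomp_unique[OF zero u(1) w'(1) u(2)] by blast
  qed
next
  assume s_inj: "inj_on s U"
  show "inj f"
  proof (rule injI)
    fix x y assume eq: "f x = f y"
    obtain w u where x: "w \<in> W" "u \<in> U" "x = w + u" using W_plus_U by blast
    obtain w' u' where y: "w' \<in> W" "u' \<in> U" "y = w' + u'" using W_plus_U by blast
    have "a u w = a u' w' \<and> s u = s u'" using eq eq_iff x y by simp
    moreover from this have "u = u'" using inj_onD[OF s_inj] x(2) y(2) by blast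
    ultimately have "w = w'"
      using inj_onD[OF bij_betw_imp_inj_on[OF fibre_bij[OF x(2)]]] x(1) y(1) by blast
    with \<open>u = u'\<close> show "x = y" using x y by simp
  qed
qed

lemma surj_iff: "surj f \<longleftrightarrow> U \<subseteq> s ` U"
proof
  assume "surj f"
  show "U \<subseteq> s ` U"
  proof
    fix u'' assume u'': "u'' \<in> U"
    obtain x where "0 + u'' = f x" using \<open>surj f\<close> by (rule surjE)
    moreover obtain w u where wu: "w \<in> W" "u \<in> U" "x = w + u" using W_plus_U by blast
    ultimately have "0 + u'' = a u w + s u" using fibred by simp
    then have "s u = u''"
      using decomp_unique[OF subspace_0[OF subspace_W] u'' fibre_into[OF wu(2,1)] base_into[OF wu(2)]]
      by simp
    with wu(2) show "u'' \<in> s ` U" by blast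
  qed
next
  assume onto: "U \<subseteq> s ` U"
  show "surj f"
  proof (unfold surj_def, rule allI)
    fix y
    obtain w'' u'' where y: "w'' \<in> W" "u'' \<in> U" "y = w'' + u''" using W_plus_U by blast
    obtain u where u: "u \<in> U" "s u = u''" using onto y(2) by blast
    obtain w where w: "w \<in> W" "a u w = w''"
      using bij_betw_imp_surj_on[OF fibre_bij[OF u(1)]] y(1) by (metis imageE)
    have "y = f (w + u)" using fibred[OF w(1) u(1)] u w y by simp
    then show "\<exists>x. y = f x" ..
  qed
qed

lemma bij_iff: "bij f \<longleftrightarrow> bij_betw s U U"
  using inj_iff surj_iff base_into by (auto simp: bij_def bij_betw_def)

end

end

context complementary_subspaces
begin

lemma conj_iota_CWAff_subset:
  assumes fin: "finite_dimensional_vector_space scale B"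
  shows "conj_iota W U ` CWAff scale W \<subseteq> AffWrSym scale W U"
proof
  fix F assume "F \<in> conj_iota W U ` CWAff scale W"
  then obtain f where F: "F = conj_iota W U f" and cwa: "coset_wise_affine scale W f"
    and "bij f" by (auto simp: CWAff_def)
  obtain \<phi> where \<phi>: "\<And>u. Vector_Spaces.linear scale scale (\<phi> u) \<and> \<phi> u ` W \<subseteq> W \<and>
      (\<forall>w\<in>W. f (w + u) = \<phi> u w + f u)"
    using coset_wise_affine_linear_part[OF cwa subspace_W] by metis
  then have lin: "\<And>u. Vector_Spaces.linear scale scale (\<phi> u)" and into: "\<And>u. \<phi> u ` W \<subseteq> W"
    and f_coset: "\<And>u w. w \<in> W \<Longrightarrow> f (w + u) = \<phi> u w + f u"
    by blast+
  define \<omega> where "\<omega> u = fst (iota W U (f u))" for u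
  define \<nu> where "\<nu> u = snd (iota W U (f u))" for u
  have \<omega>: "\<omega> u \<in> W" and \<nu>: "\<nu> u \<in> U" and f_u: "f u = \<omega> u + \<nu> u" for u
    by (rule iotaE[of "f u"]; simp add: \<omega>_def \<nu>_def)+
  have f_fibred: "f (w + u) = (\<phi> u w + \<omega> u) + \<nu> u" if "w \<in> W" for w u
    using f_coset[OF that] f_u by (simp add: add.assoc)
  have \<phi>_bij: "bij_betw (\<phi> u) W W" for u
  proof (rule inj_on_linear_imp_bij_betw_subspace[OF fin lin subspace_W into])
    show "inj_on (\<phi> u) W"
    proof (rule inj_onI)
      fix x y assume "x \<in> W" "y \<in> W" "\<phi> u x = \<phi> u y"
      then have "f (x + u) = f (y + u)" using f_coset by simp
      then show "x = y" using bij_is_inj[OF \<open>bij f\<close>] by (simp add: inj_eq)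
    qed
  qed
  have a_bij: "bij_betw (\<lambda>w. \<phi> u w + \<omega> u) W W" for u
    using bij_betw_add_const[OF subspace_W \<phi>_bij \<omega>] .
  have aW: "\<phi> u w + \<omega> u \<in> W" if "w \<in> W" for u w using bij_betw_apply[OF a_bij that] .
  interpret fibred_map scale W U "\<lambda>u w. \<phi> u w + \<omega> u" \<nu> f
    by unfold_locales (simp_all add: aW \<nu> f_fibred)
  have "bij_betw \<nu> U U"
    using bij_iff[OF a_bij] \<open>bij f\<close> by blast
  moreover have "in_Aff scale W (\<lambda>w. \<phi> u w + \<omega> u)" for u
    using lin[of u] \<phi>_bij[of u] \<omega>[of u]
    unfolding in_Aff_def sub_aut_def Vector_Spaces.linear_iff by blast
  moreover have "F = (\<lambda>p\<in>W \<times> U. (\<phi> (snd p) (fst p) + \<omega> (snd p), \<nu> (snd p)))"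
    unfolding F by (rule conj_iota_eq)
  ultimately show "F \<in> AffWrSym scale W U"
    unfolding AffWrSym_def by (auto intro!: exI[of _ \<nu>] exI[of _ "\<lambda>u w. \<phi> u w + \<omega> u"])
qed

lemma AffWrSym_subset_conj_iota_image:
  "AffWrSym scale W U \<subseteq> conj_iota W U ` CWAff scale W"
proof
  fix F assume "F \<in> AffWrSym scale W U"
  then obtain \<sigma> a where \<sigma>: "bij_betw \<sigma> U U" and aff: "\<forall>u\<in>U. in_Aff scale W (a u)"
    and F: "F = (\<lambda>p\<in>W \<times> U. (a (snd p) (fst p), \<sigma> (snd p)))"
    unfolding AffWrSym_def by blast
  obtain \<alpha> \<omega> where \<alpha>: "\<And>u. u \<in> U \<Longrightarrow> sub_aut scale W (\<alpha> u)" and \<omega>: "\<And>u. u \<in> U \<Longrightarrow> \<omega> u \<in> W"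
    and a: "\<And>u w. u \<in> U \<Longrightarrow> w \<in> W \<Longrightarrow> a u w = \<alpha> u w + \<omega> u"
    using aff unfolding in_Aff_def by metis
  have \<sigma>U: "\<sigma> u \<in> U" if "u \<in> U" for u using bij_betw_apply[OF \<sigma> that] .
  have a_bij: "bij_betw (a u) W W" if u: "u \<in> U" for u
  proof -
    have "bij_betw (\<lambda>w. \<alpha> u w + \<omega> u) W W"
      using bij_betw_add_const[OF subspace_W _ \<omega>[OF u]] \<alpha>[OF u] unfolding sub_aut_def by blast
    moreover have "bij_betw (a u) W W \<longleftrightarrow> bij_betw (\<lambda>w. \<alpha> u w + \<omega> u) W W"
      by (rule bij_betw_cong) (simp add: a u)
    ultimately show ?thesis by simp
  qed
  have aW: "a u w \<in> W" if "u \<in> U" "w \<in> W" for u w using bij_betw_apply[OF a_bij[OF that(1)] that(2)] .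
  define f where "f v = (case iota W U v of (w, u) \<Rightarrow> a u w + \<sigma> u)" for v
  have f_fibred: "f (w + u) = a u w + \<sigma> u" if "w \<in> W" "u \<in> U" for w u
    using that by (simp add: f_def)
  interpret fibred_map scale W U a \<sigma> f
    by unfold_locales (simp_all add: aW \<sigma>U f_fibred)
  have "bij f" using bij_iff[OF a_bij] \<sigma> by blast
  moreover have "coset_wise_affine scale W f"
  proof (rule coset_wise_affine_fibred[where c = "\<lambda>u. \<omega> u + \<sigma> u"])
    show "\<alpha> u ` W \<subseteq> W" if "u \<in> U" for u
      using \<alpha>[OF that] bij_betw_imp_surj_on unfolding sub_aut_def by blast
  qed (use \<alpha> a f_fibred in \<open>auto simp: sub_aut_def add.assoc\<close>)
  moreover have "conj_iota W U f = F"
    unfolding F by (rule conj_iota_eq)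
  ultimately show "F \<in> conj_iota W U ` CWAff scale W"
    unfolding CWAff_def by blast
qed

lemma conj_iota_affine_fibred:
  assumes \<alpha>: "\<And>u. u \<in> U \<Longrightarrow> sub_aut scale W (\<alpha> u)"
    and v: "\<And>u. u \<in> U \<Longrightarrow> \<omega> u \<in> W \<and> \<nu> u \<in> U \<and> v u = \<omega> u + \<nu> u"
    and f: "\<And>w u. w \<in> W \<Longrightarrow> u \<in> U \<Longrightarrow> f (w + u) = \<alpha> u w + u + v u"
    and "bij f"
  shows "bij_betw (\<lambda>u. u + \<nu> u) U U"
    and "conj_iota W U f =
      (\<lambda>p\<in>W \<times> U. (\<alpha> (snd p) (fst p) + \<omega> (snd p), snd p + \<nu> (snd p)))"
proof -
  have a_bij: "bij_betw (\<lambda>w. \<alpha> u w + \<omega> u) W W" if "u \<in> U" for u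
    using bij_betw_add_const[OF subspace_W _ conjunct1[OF v[OF that]]] \<alpha>[OF that]
    unfolding sub_aut_def by blast
  have aW: "\<alpha> u w + \<omega> u \<in> W" if "u \<in> U" "w \<in> W" for u w
    using bij_betw_apply[OF a_bij[OF that(1)] that(2)] .
  have sU: "u + \<nu> u \<in> U" if "u \<in> U" for u using subspace_add[OF subspace_U] v that by blast
  have f_fibred: "f (w + u) = (\<alpha> u w + \<omega> u) + (u + \<nu> u)" if "w \<in> W" "u \<in> U" for w u
    using f[OF that] v[OF that(2)] by (simp add: algebra_simps)
  interpret fibred_map scale W U "\<lambda>u w. \<alpha> u w + \<omega> u" "\<lambda>u. u + \<nu> u" f
    by unfold_locales (simp_all add: aW sU f_fibred)
  show "bij_betw (\<lambda>u. u + \<nu> u) U U"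
    using bij_iff[OF a_bij] \<open>bij f\<close> by blast
  show "conj_iota W U f =
      (\<lambda>p\<in>W \<times> U. (\<alpha> (snd p) (fst p) + \<omega> (snd p), snd p + \<nu> (snd p)))"
    by (rule conj_iota_eq)
qed

end

theorem theorem4p3:
  fixes scale :: "'k::field \<Rightarrow> 'v::ab_group_add \<Rightarrow> 'v"
    and W U :: "'v set"
  assumes vs: "vector_space scale"
    and fin: "\<exists>B. finite_dimensional_vector_space scale B"
    and W: "module.subspace scale W"
    and U: "module.subspace scale U"
    and cap: "W \<inter> U = {0}"
    and sum: "\<forall>v. \<exists>w\<in>W. \<exists>u\<in>U. v = w + u"
  shows "bij_betw (conj_iota W U) (CWAff scale W) (AffWrSym scale W U) \<and>
    (\<forall>(\<alpha> :: 'v \<Rightarrow> 'v \<Rightarrow> 'v) (v :: 'v \<Rightarrow> 'v) (\<omega> :: 'v \<Rightarrow> 'v) (\<nu> :: 'v \<Rightarrow> 'v) (f :: 'v \<Rightarrow> 'v).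
       (\<forall>u\<in>U. sub_aut scale W (\<alpha> u)) \<and>
       (\<forall>u\<in>U. \<omega> u \<in> W \<and> \<nu> u \<in> U \<and> v u = \<omega> u + \<nu> u) \<and>
       (\<forall>w\<in>W. \<forall>u\<in>U. f (w + u) = \<alpha> u w + u + v u) \<and>
       bij f
     \<longrightarrow> bij_betw (\<lambda>u. u + \<nu> u) U U \<and>
         conj_iota W U f = (\<lambda>p\<in>W \<times> U. (\<alpha> (snd p) (fst p) + \<omega> (snd p), snd p + \<nu> (snd p))))"
proof -
  interpret complementary_subspaces scale W U
    using vs W U cap sum by (simp add: complementary_subspaces_def complementary_subspaces_axioms_def)
  show ?thesis
  proof (intro conjI allI impI)
    obtain B where fd: "finite_dimensional_vector_space scale B" using fin by blast
    have "conj_iota W U ` CWAff scale W = AffWrSym scale W U"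
      using conj_iota_CWAff_subset[OF fd] AffWrSym_subset_conj_iota_image by (rule subset_antisym)
    moreover have "inj_on (conj_iota W U) (CWAff scale W)"
      using inj_conj_iota by (rule inj_on_subset) simp
    ultimately show "bij_betw (conj_iota W U) (CWAff scale W) (AffWrSym scale W U)"
      by (simp add: bij_betw_def)
  qed (elim conjE; rule conj_iota_affine_fibred; blast)+
qed

end
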